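(* There exists a closed convex cone $\mathcal{K}\subseteq \mathbb{R}^4$ that is nice but not amenable.
   Context: A face of a closed convex set $C$ is a closed convex subset $F\subseteq C$ such that whenever $x,y\in C$ and $\alpha x+(1-\alpha)y\in F$ for some $\alpha\in(0,1)$, then $x,y\in F$. For a set $S$, $\mathcal{K}^*$ denotes the dual cone $\{y: \langle y,x\rangle\ge 0\ \forall x\in\mathcal{K}\}$ and $S^\perp$ the orthogonal complement. A closed convex cone $\mathcal{K}$ is nice (facially dual complete) if $\mathcal{F}^*=\mathcal{K}^*+\mathcal{F}^\perp$ for every face $\mathcal{F}$ of $\mathcal{K}$. A face $F$ of a closed convex set $C$ is amenable if for every bounded set $B$ there exists $\kappa>0$ such that $\operatorname{dist}(x,F)\le\kappa\operatorname{dist}(x,C)$ for all $x\in(\operatorname{aff}F)\cap B$; $C$ is amenable if all its faces are amenable. (For a cone this is equivalent to: for each face $\mathcal{F}$ there is $\kappa>0$ with $\operatorname{dist}(x,\mathcal{F})\le\kappa\operatorname{dist}(x,\mathcal{K})$ for all $x\in\operatorname{span}\mathcal{F}$.) *)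

theory Defs
  imports "HOL-Analysis.Analysis"
begin

definition is_face :: "'a::real_inner set \<Rightarrow> 'a set \<Rightarrow> bool" where
  "is_face F C \<longleftrightarrow> closed F \<and> convex F \<and> F \<subseteq> C \<and>
     (\<forall>x\<in>C. \<forall>y\<in>C. \<forall>\<alpha>::real. 0 < \<alpha> \<and> \<alpha> < 1 \<and> \<alpha> *\<^sub>R x + (1 - \<alpha>) *\<^sub>R y \<in> F \<longrightarrow> x \<in> F \<and> y \<in> F)"

definition dual_cone :: "'a::real_inner set \<Rightarrow> 'a set" where
  "dual_cone K = {y. \<forall>x\<in>K. inner y x \<ge> 0}"

definition orth_compl :: "'a::real_inner set \<Rightarrow> 'a set" where
  "orth_compl S = {y. \<forall>x\<in>S. inner y x = 0}"

definition nice_cone :: "'a::real_inner set \<Rightarrow> bool" where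
  "nice_cone K \<longleftrightarrow> (\<forall>F. is_face F K \<longrightarrow>
     dual_cone F = {a + b | a b. a \<in> dual_cone K \<and> b \<in> orth_compl F})"

definition amenable_face :: "'a::euclidean_space set \<Rightarrow> 'a set \<Rightarrow> bool" where
  "amenable_face F C \<longleftrightarrow> (\<forall>B. bounded B \<longrightarrow>
     (\<exists>\<kappa>>0. \<forall>x \<in> (affine hull F) \<inter> B. infdist x F \<le> \<kappa> * infdist x C))"

definition amenable :: "'a::euclidean_space set \<Rightarrow> bool" where
  "amenable C \<longleftrightarrow> (\<forall>F. is_face F C \<longrightarrow> amenable_face F C)"

end

theory Submission
  imports Defs
begin

text \<open>The slice \<open>v$4 = 1\<close> of the cone is the epigraph of a convex function \<open>g\<close> of
  \<open>planar v\<close> that vanishes exactly on the unit disk \<open>D\<close>, and \<open>disk_face\<close> is the face over \<open>D\<close>.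
  Away from \<open>disk_face\<close> the cone is strictly convex: the sum of two non-collinear points of the
  cone, not both in \<open>disk_face\<close>, satisfies every defining inequality with a uniform margin and so
  lies in the interior.  Hence the faces are trivial, the whole cone, \<open>disk_face\<close>, or extreme
  rays.  Only \<open>disk_face\<close> needs work for niceness, and it is nice because every boundary point of
  \<open>D\<close> has a supporting line among the tangents that define \<open>g\<close>.  Amenability fails because
  these tangents are damped near the boundary point \<open>1\<close> of \<open>D\<close>: along the tangent line there,
  \<open>g\<close> grows like \<open>t\<^sup>4\<close> while the distance to \<open>D\<close> grows like \<open>t\<^sup>2\<close>.\<close>

section \<open>Faces, dual cones and distances\<close>

abbreviation dual_plus_perp :: "'a::real_inner set \<Rightarrow> 'a set \<Rightarrow> 'a set" where
  "dual_plus_perp K F \<equiv> {a + b | a b. a \<in> dual_cone K \<and> b \<in> orth_compl F}"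

abbreviation ray :: "'a::real_vector \<Rightarrow> 'a set" where
  "ray v \<equiv> {c *\<^sub>R v | c. 0 \<le> c}"

lemma is_face_iff_face_of: "is_face F C \<longleftrightarrow> closed F \<and> F face_of C"
proof
  assume F: "is_face F C"
  have ext: "\<forall>x\<in>C. \<forall>y\<in>C. \<forall>\<alpha>. 0 < \<alpha> \<and> \<alpha> < 1 \<and> \<alpha> *\<^sub>R x + (1 - \<alpha>) *\<^sub>R y \<in> F \<longrightarrow> x \<in> F \<and> y \<in> F"
    using F by (simp add: is_face_def)
  have "a \<in> F \<and> b \<in> F"
    if ab: "a \<in> C" "b \<in> C" and x: "x \<in> F" "x \<in> open_segment a b" for a b x
  proof -
    obtain u where u: "0 < u" "u < 1" "x = (1 - u) *\<^sub>R a + (1 - (1 - u)) *\<^sub>R b"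
      using x(2) by (auto simp: in_segment)
    have "0 < 1 - u" "1 - u < 1" using u by simp_all
    then show ?thesis using ext ab x(1) unfolding u(3) by blast
  qed
  moreover have "closed F" "convex F" "F \<subseteq> C" using F by (simp_all add: is_face_def)
  ultimately show "closed F \<and> F face_of C" unfolding face_of_def by blast
next
  assume F: "closed F \<and> F face_of C"
  have "x \<in> F \<and> y \<in> F"
    if "x \<in> C" "y \<in> C" "0 < \<alpha>" "\<alpha> < 1" "\<alpha> *\<^sub>R x + (1 - \<alpha>) *\<^sub>R y \<in> F" for x y \<alpha>
  proof (cases "x = y")
    case True
    then show ?thesis using that(5) by (simp flip: scaleR_add_left)
  next
    case False
    then have "\<alpha> *\<^sub>R x + (1 - \<alpha>) *\<^sub>R y \<in> open_segment x y"
      using that(3,4) by (auto simp: in_segment intro!: exI[of _ "1 - \<alpha>"])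
    then show ?thesis using F that(1,2,5) face_ofD by blast
  qed
  then show "is_face F C"
    using F face_of_imp_subset face_of_imp_convex unfolding is_face_def by blast
qed

lemma conic_convex_add:
  assumes "conic S" "convex S" "a \<in> S" "b \<in> S"
  shows "a + b \<in> S"
proof -
  have "(1/2) *\<^sub>R a + (1/2) *\<^sub>R b \<in> S" using assms(2-4) by (rule convexD) simp_all
  then have "2 *\<^sub>R ((1/2) *\<^sub>R a + (1/2) *\<^sub>R b) \<in> S" using conic_mul[OF assms(1)] by simp
  then show ?thesis by (simp add: scaleR_add_right)
qed

lemma conic_collinear_eq_ray:
  assumes "conic P" "P \<subseteq> K" "conic K" and pointed: "\<And>u. u \<in> K \<Longrightarrow> - u \<in> K \<Longrightarrow> u = 0"
    and v: "v \<in> P" "v \<noteq> 0" and collinear: "\<And>u. u \<in> P \<Longrightarrow> collinear {0, v, u}"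
  shows "P = ray v"
proof
  show "ray v \<subseteq> P" using assms(1) v(1) by (auto intro: conic_mul)
  show "P \<subseteq> ray v"
  proof
    fix u assume u: "u \<in> P"
    then consider "u = 0" | c where "u = c *\<^sub>R v"
      using collinear[OF u] v(2) by (auto simp: collinear_lemma)
    then show "u \<in> ray v"
    proof cases
      case 1
      then show ?thesis by (intro CollectI exI[of _ 0]) simp
    next
      case (2 c)
      have "0 \<le> c"
      proof (rule ccontr)
        assume "\<not> 0 \<le> c"
        then have "(- 1 / c) *\<^sub>R u = - v" using 2 by simp
        moreover have "(- 1 / c) *\<^sub>R u \<in> K"
          using \<open>\<not> 0 \<le> c\<close> u assms(2) conic_mul[OF assms(3), of u "- 1 / c"] by auto
        ultimately show False using pointed v assms(2) by auto
      qed
      then show ?thesis using 2 by blast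
    qed
  qed
qed

lemma minkowski_sumI: "a \<in> A \<Longrightarrow> b \<in> B \<Longrightarrow> a + b \<in> {x + y | x y. x \<in> A \<and> y \<in> B}"
  by blast

lemma dual_cone_add: "a \<in> dual_cone K \<Longrightarrow> b \<in> dual_cone K \<Longrightarrow> a + b \<in> dual_cone K"
  by (simp add: dual_cone_def inner_add_left)

lemma dual_cone_scaleR: "0 \<le> c \<Longrightarrow> a \<in> dual_cone K \<Longrightarrow> c *\<^sub>R a \<in> dual_cone K"
  by (simp add: dual_cone_def)

lemma dual_plus_perp_subset:
  assumes "F \<subseteq> K"
  shows "dual_plus_perp K F \<subseteq> dual_cone F"
proof
  fix y assume "y \<in> dual_plus_perp K F"
  then obtain a b where "y = a + b" "a \<in> dual_cone K" "b \<in> orth_compl F" by blast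
  then show "y \<in> dual_cone F"
    using assms by (auto simp: dual_cone_def orth_compl_def inner_add_left)
qed

lemma nice_coneI:
  assumes "\<And>F. is_face F K \<Longrightarrow> dual_cone F \<subseteq> dual_plus_perp K F"
  shows "nice_cone K"
  unfolding nice_cone_def
proof (intro allI impI)
  fix F assume F: "is_face F K"
  then have "F \<subseteq> K" by (simp add: is_face_def)
  show "dual_cone F = dual_plus_perp K F"
    using assms[OF F] dual_plus_perp_subset[OF \<open>F \<subseteq> K\<close>] by (rule equalityI)
qed

lemma nice_face_trivial: "F \<subseteq> {0} \<Longrightarrow> dual_cone F \<subseteq> dual_plus_perp K F"
proof
  fix y assume "F \<subseteq> {0}"
  then have "0 \<in> dual_cone K" "y \<in> orth_compl F" by (auto simp: dual_cone_def orth_compl_def)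
  from minkowski_sumI[OF this] show "y \<in> dual_plus_perp K F" by simp
qed

lemma nice_face_self: "dual_cone K \<subseteq> dual_plus_perp K K"
proof
  fix y assume "y \<in> dual_cone K"
  moreover have "0 \<in> orth_compl K" by (simp add: orth_compl_def)
  ultimately have "y + 0 \<in> dual_plus_perp K K" by (rule minkowski_sumI)
  then show "y \<in> dual_plus_perp K K" by simp
qed

lemma nice_face_ray:
  assumes e: "e \<in> dual_cone K" "inner e v > 0"
  shows "dual_cone (ray v) \<subseteq> dual_plus_perp K (ray v)"
proof
  fix y assume y: "y \<in> dual_cone (ray v)"
  have "v \<in> ray v" by (rule CollectI, rule exI[of _ 1]) simp
  then have "0 \<le> inner y v" using y by (simp add: dual_cone_def)
  define k where "k = inner y v / inner e v"
  have k: "0 \<le> k" "k * inner e v = inner y v"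
    using \<open>0 \<le> inner y v\<close> e(2) by (simp_all add: k_def)
  have "k *\<^sub>R e \<in> dual_cone K" by (rule dual_cone_scaleR[OF k(1) e(1)])
  moreover have "y - k *\<^sub>R e \<in> orth_compl (ray v)"
    unfolding orth_compl_def
  proof (intro CollectI ballI)
    fix x assume "x \<in> ray v"
    then obtain c where "x = c *\<^sub>R v" by blast
    then show "inner (y - k *\<^sub>R e) x = 0" by (simp add: inner_diff_left k(2))
  qed
  ultimately have "k *\<^sub>R e + (y - k *\<^sub>R e) \<in> dual_plus_perp K (ray v)"
    by (rule minkowski_sumI)
  then show "y \<in> dual_plus_perp K (ray v)" by simp
qed

lemma infdist_ge_inner_div_norm:
  fixes x \<phi> :: "'a::real_inner"
  assumes "S \<noteq> {}" and "\<And>y. y \<in> S \<Longrightarrow> inner \<phi> y \<le> 0"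
  shows "inner \<phi> x / norm \<phi> \<le> infdist x S"
  unfolding infdist_notempty[OF assms(1)]
proof (rule cINF_greatest[OF assms(1)])
  fix y assume "y \<in> S"
  then have "inner \<phi> x \<le> norm \<phi> * dist x y"
    using assms(2)[of y] norm_cauchy_schwarz[of \<phi> "x - y"] by (simp add: dist_norm inner_diff_right)
  then have le: "inner \<phi> x \<le> dist x y * norm \<phi>"
    by (simp only: mult.commute)
  show "inner \<phi> x / norm \<phi> \<le> dist x y"
  proof (cases "\<phi> = 0")
    case False
    have "inner \<phi> x / norm \<phi> \<le> dist x y * norm \<phi> / norm \<phi>"
      by (rule divide_right_mono[OF le]) simp
    also have "\<dots> = dist x y" using False by simp
    finally show ?thesis .
  qed simp
qed

lemma square_sum_div_defect:
  fixes x y p q :: real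
  assumes "0 < p" "0 < q"
  shows "x\<^sup>2 / p + y\<^sup>2 / q - (x + y)\<^sup>2 / (p + q) = (x * q - y * p)\<^sup>2 / (p * q * (p + q))"
  using assms by (simp add: field_simps) (simp add: power2_eq_square algebra_simps)

lemma square_sum_div_le:
  fixes x y p q :: real
  assumes "0 < p" "0 < q"
  shows "(x + y)\<^sup>2 / (p + q) \<le> x\<^sup>2 / p + y\<^sup>2 / q"
  using square_sum_div_defect[OF assms, of x y] assms
  by (smt (verit) divide_nonneg_pos mult_pos_pos zero_le_power2)

lemma sqrt_one_plus_square_le: "sqrt (1 + t\<^sup>2) \<le> 1 + t\<^sup>2 / 2"
proof (rule real_le_lsqrt)
  show "1 + t\<^sup>2 \<le> (1 + t\<^sup>2 / 2)\<^sup>2"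
    using zero_le_power2[of "t\<^sup>2"] by (simp add: power2_eq_square field_simps)
qed simp_all

section \<open>Coordinates of \<open>\<real>\<^sup>4\<close> and the tangent lines of the unit circle\<close>

definition vec4 :: "real \<Rightarrow> real \<Rightarrow> real \<Rightarrow> real \<Rightarrow> real^4" where
  "vec4 a b c d = (\<chi> i. if i = 1 then a else if i = 2 then b else if i = 3 then c else d)"

lemma vec4_nth [simp]:
  "vec4 a b c d $ 1 = a" "vec4 a b c d $ 2 = b" "vec4 a b c d $ 3 = c" "vec4 a b c d $ 4 = d"
  by (simp_all add: vec4_def)

lemma vec4_eq_iff: "(u::real^4) = v \<longleftrightarrow> u$1 = v$1 \<and> u$2 = v$2 \<and> u$3 = v$3 \<and> u$4 = v$4"
  by (auto simp: vec_eq_iff forall_4)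

lemma inner_vec4: "inner (u::real^4) v = u$1 * v$1 + u$2 * v$2 + u$3 * v$3 + u$4 * v$4"
  by (simp add: inner_vec_def sum_4)

lemma norm_vec4: "norm (u::real^4) = sqrt ((u$1)\<^sup>2 + (u$2)\<^sup>2 + (u$3)\<^sup>2 + (u$4)\<^sup>2)"
  by (simp add: norm_eq_sqrt_inner inner_vec4 power2_eq_square)

lemma axis3_nth [simp]:
  "(axis 3 c :: real^4) $ 1 = 0" "(axis 3 c :: real^4) $ 2 = 0"
  "(axis 3 c :: real^4) $ 3 = c" "(axis 3 c :: real^4) $ 4 = 0"
  by (simp_all add: axis_def)

definition planar :: "real^4 \<Rightarrow> complex" where
  "planar v = Complex (v$1) (v$2)"

lemma planar_zero [simp]: "planar 0 = 0"
  and planar_add [simp]: "planar (u + v) = planar u + planar v"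
  and planar_diff [simp]: "planar (u - v) = planar u - planar v"
  and planar_scaleR [simp]: "planar (c *\<^sub>R v) = c *\<^sub>R planar v"
  and planar_vec4 [simp]: "planar (vec4 a b c d) = Complex a b"
  and planar_axis3 [simp]: "planar (axis 3 c) = 0"
  by (simp_all add: planar_def complex_eq_iff)

lemma inner_vec4_planar: "inner (u::real^4) v = inner (planar u) (planar v) + u$3 * v$3 + u$4 * v$4"
  by (simp add: inner_vec4 planar_def inner_complex_def)

lemma bounded_linear_planar: "bounded_linear planar"
  unfolding linear_conv_bounded_linear[symmetric] by (rule linearI) simp_all

lemmas continuous_planar [continuous_intros] =
  bounded_linear.continuous[OF bounded_linear_planar]
  bounded_linear.continuous_on[OF bounded_linear_planar]

definition excess :: "real^4 \<Rightarrow> real" where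
  "excess v = max 0 (norm (planar v) - v$4)"

lemma excess_nonneg: "0 \<le> excess v"
  by (simp add: excess_def)

lemma excess_eq_0_iff: "excess v = 0 \<longleftrightarrow> norm (planar v) \<le> v$4"
  by (simp add: excess_def max_def)

lemma excess_add: "excess (u + v) \<le> excess u + excess v"
  using norm_triangle_ineq[of "planar u" "planar v"] by (simp add: excess_def)

lemma excess_scaleR: "0 \<le> c \<Longrightarrow> excess (c *\<^sub>R v) = c * excess v"
  by (simp add: excess_def max_mult_distrib_left right_diff_distrib)

lemma excess_add_axis3 [simp]: "excess (v + axis 3 c) = excess v"
  by (simp add: excess_def)

lemma continuous_excess [continuous_intros]: "continuous F f \<Longrightarrow> continuous F (\<lambda>x. excess (f x))"
  and continuous_on_excess [continuous_intros]:
    "continuous_on S f \<Longrightarrow> continuous_on S (\<lambda>x. excess (f x))"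
  unfolding excess_def by (intro continuous_intros; assumption)+

text \<open>A pair \<open>(\<zeta>, \<gamma>)\<close> encodes the line \<open>\<langle>\<zeta>, p\<rangle> = \<gamma>\<close> of the plane.  For a unit vector \<open>w\<close>,
  \<open>((1 - Re w) w, 1 - Re w)\<close> is the tangent line of the unit circle at \<open>w\<close>, scaled by the factor
  \<open>1 - Re w\<close> that vanishes at \<open>w = 1\<close>; the tangent \<open>(1, 1)\<close> at \<open>1\<close> itself is added unscaled so
  that no boundary point of the disk loses its supporting line.\<close>

definition tangents :: "(complex \<times> real) set" where
  "tangents = {((1 - Re w) *\<^sub>R w, 1 - Re w) | w. norm w = 1} \<union> {(1, 1)}"

fun tangent_form :: "complex \<times> real \<Rightarrow> real^4 \<Rightarrow> real" where
  "tangent_form (\<zeta>, \<gamma>) v = inner \<zeta> (planar v) - \<gamma> * v$4"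

lemma tangent_form_add [simp]: "tangent_form l (u + v) = tangent_form l u + tangent_form l v"
  by (cases l) (simp add: inner_add_right algebra_simps)

lemma tangent_form_diff [simp]: "tangent_form l (u - v) = tangent_form l u - tangent_form l v"
  by (cases l) (simp add: inner_diff_right algebra_simps)

lemma tangent_form_scaleR [simp]: "tangent_form l (c *\<^sub>R v) = c * tangent_form l v"
  by (cases l) (simp add: algebra_simps)

lemma tangent_form_axis3 [simp]: "tangent_form l (axis 3 c) = 0"
  by (cases l) simp

lemma continuous_on_tangent_form [continuous_intros]:
  "continuous_on S f \<Longrightarrow> continuous_on S (\<lambda>x. tangent_form l (f x))"
  by (cases l) (simp, intro continuous_intros)

lemma tangentsE:
  assumes "l \<in> tangents"
  obtains w where "norm w = 1" "l = ((1 - Re w) *\<^sub>R w, 1 - Re w)" | "l = (1, 1)"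
  using assms unfolding tangents_def by blast

lemma unit_in_tangents: "norm w = 1 \<Longrightarrow> ((1 - Re w) *\<^sub>R w, 1 - Re w) \<in> tangents"
  unfolding tangents_def by (rule UnI1, rule CollectI, rule exI[of _ w]) simp

lemma zero_in_tangents: "(0, 0) \<in> tangents"
  using unit_in_tangents[of 1] by simp

lemma unit_Re_bounds: "norm w = 1 \<Longrightarrow> 0 \<le> 1 - Re w \<and> 1 - Re w \<le> 2"
  using abs_Re_le_cmod[of w] by linarith

lemma abs_tangent_form_le:
  assumes "l \<in> tangents"
  shows "\<bar>tangent_form l v\<bar> \<le> 2 * norm (planar v) + 2 * \<bar>v$4\<bar>"
proof -
  obtain \<zeta> \<gamma> where l: "l = (\<zeta>, \<gamma>)" and bounds: "norm \<zeta> \<le> 2" "\<bar>\<gamma>\<bar> \<le> 2"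
    using assms unit_Re_bounds by (cases rule: tangentsE) auto
  have "\<bar>inner \<zeta> (planar v)\<bar> \<le> 2 * norm (planar v)"
    using Cauchy_Schwarz_ineq2[of \<zeta> "planar v"] bounds(1)
    by (meson mult_right_mono norm_ge_zero order_trans)
  moreover have "\<bar>\<gamma> * v$4\<bar> \<le> 2 * \<bar>v$4\<bar>"
    using bounds(2) by (simp add: abs_mult mult_right_mono)
  moreover have "\<bar>tangent_form l v\<bar> \<le> \<bar>inner \<zeta> (planar v)\<bar> + \<bar>\<gamma> * v$4\<bar>"
    using l abs_triangle_ineq4 by simp
  ultimately show ?thesis by linarith
qed

lemma tangent_form_nonpos:
  assumes "l \<in> tangents" and "norm (planar v) \<le> v$4"
  shows "tangent_form l v \<le> 0"
  using assms(1)
proof (cases rule: tangentsE)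
  case (1 w)
  have "inner w (planar v) \<le> v$4"
    using norm_cauchy_schwarz[of w "planar v"] 1(1) assms(2) by simp
  then have "(1 - Re w) * (inner w (planar v) - v$4) \<le> 0"
    using unit_Re_bounds[OF 1(1)] by (simp add: mult_nonneg_nonpos)
  then show ?thesis using 1(2) by (simp add: algebra_simps)
next
  case 2
  then show ?thesis using complex_Re_le_cmod[of "planar v"] assms(2) by simp
qed

lemma tangents_normal:
  assumes "norm n = 1"
  shows "\<exists>\<mu>>0. (\<mu> *\<^sub>R n, \<mu>) \<in> tangents"
proof (cases "n = 1")
  case True
  have "(1, 1) \<in> tangents" by (simp add: tangents_def)
  then show ?thesis using True by (intro exI[of _ 1]) simp
next
  case False
  have "Re n \<noteq> 1"
  proof
    assume "Re n = 1"
    then have "Im n = 0" using assms by (simp add: cmod_def)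
    then show False using \<open>Re n = 1\<close> False by (simp add: complex_eq_iff)
  qed
  then have "0 < 1 - Re n" using unit_Re_bounds[OF assms] by simp
  then show ?thesis using unit_in_tangents[OF assms] by blast
qed

lemma tangent_form_quartic:
  assumes "l \<in> tangents" and "planar v = Complex 1 t" and "v$4 = 1"
  shows "tangent_form l v \<le> t^4 / 2"
  using assms(1)
proof (cases rule: tangentsE)
  case (1 w)
  define d where "d = 1 - Re w"
  have "0 \<le> d" using unit_Re_bounds[OF 1(1)] by (simp add: d_def)
  have "(Im w)\<^sup>2 = 2 * d - d * d"
    using 1(1) by (simp add: d_def cmod_def power2_eq_square algebra_simps)
  moreover have "0 \<le> d * d" using \<open>0 \<le> d\<close> by simp
  ultimately have im: "(Im w)\<^sup>2 \<le> 2 * d" by linarith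
  have "tangent_form l v = d * Im w * t - d\<^sup>2"
    using 1(2) assms(2,3) by (simp add: d_def inner_complex_def power2_eq_square algebra_simps)
  also have "\<dots> \<le> d\<^sup>2 / 2 + (Im w)\<^sup>2 * t\<^sup>2 / 2 - d\<^sup>2"
    using zero_le_power2[of "d - Im w * t"] by (simp add: power2_eq_square algebra_simps)
  also have "\<dots> \<le> d * t\<^sup>2 - d\<^sup>2 / 2"
    using mult_right_mono[OF im, of "t\<^sup>2"] by simp
  also have "\<dots> \<le> t^4 / 2"
    using zero_le_power2[of "d - t\<^sup>2"] by (simp add: power2_eq_square power4_eq_xxxx algebra_simps)
  finally show ?thesis .
next
  case 2
  then show ?thesis using assms(2,3) by simp
qed

section \<open>The cone\<close>

text \<open>The slice \<open>v$4 = 1\<close> is the epigraph of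
  \<open>g p = (SUP (\<zeta>, \<gamma>) \<in> tangents. \<langle>\<zeta>, p\<rangle> - \<gamma>) + (max 0 (|p| - 1))\<^sup>2\<close> with \<open>p = planar v\<close>;
  the slice \<open>v$4 = 0\<close> is the ray through \<open>axis 3 1\<close>.\<close>

definition example_cone :: "(real^4) set" where
  "example_cone = {v. 0 \<le> v$4 \<and> 0 \<le> v$3 \<and>
     (\<forall>l\<in>tangents. v$4 * tangent_form l v + (excess v)\<^sup>2 \<le> v$4 * v$3)}"

text \<open>Only meaningful for \<open>v$4 > 0\<close>: at \<open>v$4 = 0\<close> the division returns \<open>0\<close>.\<close>

definition slack :: "complex \<times> real \<Rightarrow> real^4 \<Rightarrow> real" where
  "slack l v = v$3 - tangent_form l v - (excess v)\<^sup>2 / v$4"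

definition excess_gap :: "real^4 \<Rightarrow> real^4 \<Rightarrow> real" where
  "excess_gap a b = (excess a)\<^sup>2 / a$4 + (excess b)\<^sup>2 / b$4 - (excess (a + b))\<^sup>2 / (a$4 + b$4)"

lemma closed_example_cone: "closed example_cone"
  unfolding example_cone_def Ball_def
  by (intro closed_Collect_conj closed_Collect_all closed_Collect_imp closed_Collect_le
        continuous_intros) simp_all

lemma example_cone_axis:
  assumes "v \<in> example_cone" "v$4 = 0"
  shows "v = axis 3 (v$3)"
proof -
  have "(excess v)\<^sup>2 \<le> 0" using assms zero_in_tangents by (auto simp: example_cone_def)
  then have "norm (planar v) \<le> 0" using assms(2) by (simp add: excess_eq_0_iff)
  then have "planar v = 0" by simp
  then show ?thesis using assms(2) by (simp add: vec4_eq_iff planar_def complex_eq_iff)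
qed

lemma example_cone_add_axis3:
  assumes v: "v \<in> example_cone" and c: "0 \<le> c"
  shows "v + axis 3 c \<in> example_cone"
proof -
  have "0 \<le> v$4" using v by (simp add: example_cone_def)
  then have "v$4 * v$3 \<le> v$4 * (v$3 + c)" using c by (simp add: mult_left_mono)
  moreover have "v$4 * tangent_form l v + (excess v)\<^sup>2 \<le> v$4 * v$3" if "l \<in> tangents" for l
    using v that by (simp add: example_cone_def)
  ultimately show ?thesis
    using v c unfolding example_cone_def by (auto intro: order_trans)
qed

lemma mem_example_cone_iff_slack:
  assumes "0 < v$4"
  shows "v \<in> example_cone \<longleftrightarrow> (\<forall>l\<in>tangents. 0 \<le> slack l v)"
proof -
  have scaled: "v$4 * slack l v = v$4 * v$3 - (v$4 * tangent_form l v + (excess v)\<^sup>2)" for l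
    using assms by (simp add: slack_def field_simps)
  have "0 \<le> slack l v \<longleftrightarrow> 0 \<le> v$4 * slack l v" for l
    using assms by (simp add: zero_le_mult_iff)
  then have "0 \<le> slack l v \<longleftrightarrow> v$4 * tangent_form l v + (excess v)\<^sup>2 \<le> v$4 * v$3" for l
    by (simp add: scaled)
  moreover have "0 \<le> v$3" if "0 \<le> slack (0, 0) v"
    using that assms by (simp add: slack_def) (meson divide_nonneg_pos order_trans zero_le_power2)
  ultimately show ?thesis
    using assms zero_in_tangents by (auto simp: example_cone_def)
qed

lemma slack_add: "slack l (a + b) = slack l a + slack l b + excess_gap a b"
  by (simp add: slack_def excess_gap_def)

lemma slack_add_axis3 [simp]: "slack l (v + axis 3 c) = slack l v + c"
  by (simp add: slack_def)

lemma excess_sum_div_le: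
  assumes "0 < a$4" "0 < b$4"
  shows "(excess (a + b))\<^sup>2 / (a$4 + b$4) \<le> (excess a + excess b)\<^sup>2 / (a$4 + b$4)"
proof -
  have "(excess (a + b))\<^sup>2 \<le> (excess a + excess b)\<^sup>2"
    using excess_add excess_nonneg by (simp add: power_mono)
  then show ?thesis using assms by (simp add: divide_right_mono)
qed

lemma excess_gap_nonneg: "0 < a$4 \<Longrightarrow> 0 < b$4 \<Longrightarrow> 0 \<le> excess_gap a b"
  using excess_sum_div_le square_sum_div_le[of "a$4" "b$4" "excess a" "excess b"]
  by (fastforce simp: excess_gap_def)

lemma conic_example_cone: "conic example_cone"
  unfolding conic_def
proof (intro allI impI)
  fix v and c :: real assume v: "v \<in> example_cone" and c: "0 \<le> c"
  have "c\<^sup>2 * (v$4 * tangent_form l v + (excess v)\<^sup>2) \<le> c\<^sup>2 * (v$4 * v$3)" if "l \<in> tangents" for l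
    using v that by (simp add: example_cone_def mult_left_mono)
  then show "c *\<^sub>R v \<in> example_cone"
    using v c by (simp add: example_cone_def excess_scaleR power2_eq_square algebra_simps)
qed

lemma example_cone_add:
  assumes a: "a \<in> example_cone" and b: "b \<in> example_cone"
  shows "a + b \<in> example_cone"
proof -
  consider "a$4 = 0" | "b$4 = 0" | "0 < a$4" "0 < b$4"
    using a b by (force simp: example_cone_def)
  then show ?thesis
  proof cases
    case 1
    have eq: "a + b = b + axis 3 (a$3)" using example_cone_axis[OF a 1] by (metis add.commute)
    have "0 \<le> a$3" using a by (simp add: example_cone_def)
    show ?thesis unfolding eq by (rule example_cone_add_axis3[OF b \<open>0 \<le> a$3\<close>])
  next
    case 2
    have eq: "a + b = a + axis 3 (b$3)" using example_cone_axis[OF b 2] by metis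
    have "0 \<le> b$3" using b by (simp add: example_cone_def)
    show ?thesis unfolding eq by (rule example_cone_add_axis3[OF a \<open>0 \<le> b$3\<close>])
  next
    case pos: 3
    have "0 \<le> slack l (a + b)" if "l \<in> tangents" for l
      using slack_add[of l a b] excess_gap_nonneg[OF pos] that a b
      by (simp add: mem_example_cone_iff_slack[OF pos(1)] mem_example_cone_iff_slack[OF pos(2)])
    then show ?thesis using pos by (simp add: mem_example_cone_iff_slack)
  qed
qed

lemma convex_example_cone: "convex example_cone"
  unfolding convex_def using conic_example_cone example_cone_add by (simp add: conic_def)

lemma example_cone_pointed:
  assumes "v \<in> example_cone" "- v \<in> example_cone"
  shows "v = 0"
proof -
  have "v$4 = 0" "v$3 = 0" using assms by (auto simp: example_cone_def)
  then show ?thesis using example_cone_axis[OF assms(1)] by simp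
qed

definition disk_face :: "(real^4) set" where
  "disk_face = {v. v$3 = 0 \<and> norm (planar v) \<le> v$4}"

lemma mem_disk_face_iff: "v \<in> disk_face \<longleftrightarrow> v \<in> example_cone \<and> v$3 = 0"
proof
  assume "v \<in> disk_face"
  then have v: "v$3 = 0" "norm (planar v) \<le> v$4" by (simp_all add: disk_face_def)
  have "excess v = 0" using v(2) by (simp add: excess_eq_0_iff)
  moreover have "0 \<le> v$4" using v(2) norm_ge_zero[of "planar v"] by linarith
  moreover have "v$4 * tangent_form l v \<le> 0" if "l \<in> tangents" for l
    using tangent_form_nonpos[OF that v(2)] \<open>0 \<le> v$4\<close> by (simp add: mult_nonneg_nonpos)
  ultimately show "v \<in> example_cone \<and> v$3 = 0" using v(1) by (simp add: example_cone_def)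
next
  assume v: "v \<in> example_cone \<and> v$3 = 0"
  then have "(excess v)\<^sup>2 \<le> 0" using zero_in_tangents by (auto simp: example_cone_def)
  then show "v \<in> disk_face" using v by (simp add: disk_face_def excess_eq_0_iff)
qed

lemma disk_face_eq: "disk_face = example_cone \<inter> {v. inner (axis 3 1) v = 0}"
  by (auto simp: mem_disk_face_iff inner_commute[of "axis 3 1"] inner_axis)

lemma is_face_disk_face: "is_face disk_face example_cone"
  unfolding is_face_iff_face_of disk_face_eq
proof
  show "closed (example_cone \<inter> {v. inner (axis 3 1) v = 0})"
    by (intro closed_Int closed_example_cone closed_hyperplane)
  have "0 \<le> inner (axis 3 1) v" if "v \<in> example_cone" for v
    using that by (simp add: inner_commute[of "axis 3 1"] inner_axis example_cone_def)
  then show "example_cone \<inter> {v. inner (axis 3 1) v = 0} face_of example_cone"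
    by (intro face_of_Int_supporting_hyperplane_ge convex_example_cone)
qed

section \<open>Strict convexity away from the disk face\<close>

definition strictly_feasible :: "real^4 \<Rightarrow> bool" where
  "strictly_feasible v \<longleftrightarrow> 0 < v$4 \<and> (\<exists>\<delta>>0. \<forall>l\<in>tangents. \<delta> \<le> slack l v)"

lemma strictly_feasible_interior:
  assumes "strictly_feasible s"
  shows "s \<in> interior example_cone"
proof -
  obtain \<delta> where s4: "0 < s$4" and \<delta>: "0 < \<delta>" and slack_s: "\<forall>l\<in>tangents. \<delta> \<le> slack l s"
    using assms by (auto simp: strictly_feasible_def)
  define g where "g v = v$3 - (excess v)\<^sup>2 / v$4" for v :: "real^4"
  define \<Phi> where "\<Phi> v = 2 * norm (planar v - planar s) + 2 * \<bar>v$4 - s$4\<bar> + \<bar>g v - g s\<bar>" for v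
  have "isCont \<Phi> s"
    unfolding \<Phi>_def g_def using s4 by (intro continuous_intros) simp
  moreover have "\<Phi> s = 0" by (simp add: \<Phi>_def)
  ultimately have "eventually (\<lambda>v. \<Phi> v < \<delta>) (nhds s)"
    using \<delta> unfolding continuous_at tendsto_at_iff_tendsto_nhds by (auto intro: order_tendstoD)
  moreover have "eventually (\<lambda>v. v \<in> {v. 0 < v$4}) (nhds s)"
    using s4 by (intro eventually_nhds_in_open open_Collect_less continuous_intros) simp_all
  ultimately have "eventually (\<lambda>v. v \<in> example_cone) (nhds s)"
  proof eventually_elim
    case (elim v)
    have "0 \<le> slack l v" if "l \<in> tangents" for l
    proof -
      have "slack l v = slack l s - tangent_form l (v - s) + (g v - g s)"
        by (simp add: slack_def g_def)
      moreover have "\<bar>tangent_form l (v - s)\<bar> \<le> 2 * norm (planar v - planar s) + 2 * \<bar>v$4 - s$4\<bar>"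
        using abs_tangent_form_le[OF that, of "v - s"] by simp
      ultimately show ?thesis using slack_s that elim(1) unfolding \<Phi>_def by fastforce
    qed
    then show ?case using elim(2) by (simp add: mem_example_cone_iff_slack)
  qed
  then obtain d where "0 < d" "\<forall>v. dist v s < d \<longrightarrow> v \<in> example_cone"
    unfolding eventually_nhds_metric by blast
  then show ?thesis unfolding mem_interior by (auto simp: dist_commute)
qed

lemma strictly_feasible_add_axis3:
  assumes "v \<in> example_cone" "0 < v$4" "0 < c"
  shows "strictly_feasible (v + axis 3 c)"
  using assms unfolding strictly_feasible_def by (auto simp: mem_example_cone_iff_slack)

lemma excess_gap_eq_0D:
  assumes pos: "0 < a$4" "0 < b$4" and gap: "excess_gap a b = 0"
  shows "excess (a + b) = excess a + excess b" and "excess a * b$4 = excess b * a$4"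
proof -
  have eq1: "(excess (a + b))\<^sup>2 / (a$4 + b$4) = (excess a + excess b)\<^sup>2 / (a$4 + b$4)"
    and eq: "(excess a + excess b)\<^sup>2 / (a$4 + b$4) = (excess a)\<^sup>2 / a$4 + (excess b)\<^sup>2 / b$4"
    using excess_sum_div_le[OF pos] square_sum_div_le[OF pos, of "excess a" "excess b"] gap
    unfolding excess_gap_def by linarith+
  moreover have "a$4 + b$4 \<noteq> 0" using pos by simp
  ultimately have "(excess (a + b))\<^sup>2 = (excess a + excess b)\<^sup>2"
    using divide_cancel_right by blast
  then show "excess (a + b) = excess a + excess b"
    using excess_nonneg by (simp add: power2_eq_iff_nonneg add_nonneg_nonneg)
  have "(excess a * b$4 - excess b * a$4)\<^sup>2 / (a$4 * b$4 * (a$4 + b$4)) = 0"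
    using square_sum_div_defect[OF pos, of "excess a" "excess b"] eq by simp
  then show "excess a * b$4 = excess b * a$4" using pos by simp
qed

lemma excess_additive_imp_parallel:
  assumes pos: "0 < a$4" "0 < b$4"
    and sum: "excess (a + b) = excess a + excess b"
    and weights: "excess a * b$4 = excess b * a$4"
    and nonzero: "0 < excess a \<or> 0 < excess b"
  shows "b$4 *\<^sub>R planar a = a$4 *\<^sub>R planar b"
proof -
  let ?pa = "planar a" and ?pb = "planar b"
  have "0 < excess (a + b)"
    using sum nonzero excess_nonneg[of a] excess_nonneg[of b] by linarith
  then have "excess (a + b) = norm (?pa + ?pb) - (a$4 + b$4)"
    by (simp add: excess_def max_def split: if_splits)
  moreover have "norm ?pa - a$4 \<le> excess a" "norm ?pb - b$4 \<le> excess b"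
    by (simp_all add: excess_def)
  moreover note norm_triangle_ineq[of ?pa ?pb]
  ultimately have tri: "norm (?pa + ?pb) = norm ?pa + norm ?pb"
    and ea: "excess a = norm ?pa - a$4" and eb: "excess b = norm ?pb - b$4"
    using sum by linarith+
  have norms: "norm ?pa * b$4 = norm ?pb * a$4"
    using weights unfolding ea eb by (simp add: algebra_simps)
  have "norm ?pa \<noteq> 0" using ea excess_nonneg[of a] pos(1) by auto
  have "norm ?pa *\<^sub>R (b$4 *\<^sub>R ?pa) = a$4 *\<^sub>R (norm ?pb *\<^sub>R ?pa)"
    using norms by (simp add: mult.commute)
  also have "\<dots> = a$4 *\<^sub>R (norm ?pa *\<^sub>R ?pb)"
    using tri by (simp add: norm_triangle_eq)
  also have "\<dots> = norm ?pa *\<^sub>R (a$4 *\<^sub>R ?pb)" by simp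
  finally show ?thesis using \<open>norm ?pa \<noteq> 0\<close> by (metis scaleR_cancel_left)
qed

lemma strictly_feasible_add_of_fourth_zero:
  assumes a: "a \<in> example_cone" "a$4 = 0" and b: "b \<in> example_cone"
    and indep: "\<not> collinear {0, a, b}"
  shows "strictly_feasible (a + b)"
proof -
  have a_eq: "a = axis 3 (a$3)" using example_cone_axis[OF a] .
  have "a$3 \<noteq> 0"
  proof
    assume "a$3 = 0"
    then have "a = 0" using a_eq by simp
    then show False using indep by (simp add: collinear_lemma)
  qed
  then have a3: "0 < a$3" using a by (simp add: example_cone_def)
  have "b$4 \<noteq> 0"
  proof
    assume "b$4 = 0"
    then have "b = (b$3 / a$3) *\<^sub>R a"
      using example_cone_axis[OF b] a_eq a3 by (simp add: vec4_eq_iff)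
    then show False using indep by (auto simp: collinear_lemma)
  qed
  then have "0 < b$4" using b by (simp add: example_cone_def)
  have eq: "a + b = b + axis 3 (a$3)" using a_eq by (metis add.commute)
  show ?thesis unfolding eq by (rule strictly_feasible_add_axis3[OF b \<open>0 < b$4\<close> a3])
qed

lemma strictly_feasible_add_over_disk:
  assumes a: "a \<in> example_cone" "norm (planar a) \<le> a$4"
    and b: "b \<in> example_cone" "norm (planar b) \<le> b$4"
    and pos: "0 < a$4" and off_face: "\<not> (a \<in> disk_face \<and> b \<in> disk_face)"
  shows "strictly_feasible (a + b)"
proof -
  have disk: "norm (planar (a + b)) \<le> (a + b)$4"
    using a(2) b(2) norm_triangle_ineq[of "planar a" "planar b"] by simp
  have "a$3 \<noteq> 0 \<or> b$3 \<noteq> 0" using off_face a b by (auto simp: disk_face_def)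
  then have s3: "0 < (a + b)$3" using a b by (auto simp: example_cone_def)
  have "(a + b)$3 \<le> slack l (a + b)" if "l \<in> tangents" for l
    using tangent_form_nonpos[OF that disk] disk
    by (simp add: slack_def excess_eq_0_iff[THEN iffD2])
  moreover have "0 < (a + b)$4" using pos b by (simp add: example_cone_def add_pos_nonneg)
  ultimately show ?thesis using s3 unfolding strictly_feasible_def by blast
qed

text \<open>If \<open>b\<close> is \<open>r a\<close> shifted along \<open>axis 3\<close>, then \<open>a + b\<close> is a point of the cone shifted upwards
  along \<open>axis 3\<close>: a multiple of \<open>a\<close> if the shift is upwards, a multiple of \<open>b\<close> otherwise.\<close>

lemma strictly_feasible_add_parallel:
  assumes a: "a \<in> example_cone" "0 < a$4" and b: "b \<in> example_cone" "0 < b$4"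
    and par: "b$4 *\<^sub>R planar a = a$4 *\<^sub>R planar b" and indep: "\<not> collinear {0, a, b}"
  shows "strictly_feasible (a + b)"
proof -
  define r where "r = b$4 / a$4"
  define c where "c = b$3 - r * a$3"
  have b_eq: "b = r *\<^sub>R a + axis 3 c"
    using par a(2) by (simp add: vec4_eq_iff r_def c_def planar_def complex_eq_iff field_simps)
  have "0 < r" using a(2) b(2) by (simp add: r_def)
  have "c \<noteq> 0"
  proof
    assume "c = 0"
    then have "b = r *\<^sub>R a" using b_eq by simp
    then show False using indep by (auto simp: collinear_lemma)
  qed
  show ?thesis
  proof (cases "0 < c")
    case True
    have eq: "a + b = (1 + r) *\<^sub>R a + axis 3 c" using b_eq by (simp add: algebra_simps)
    have "(1 + r) *\<^sub>R a \<in> example_cone"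
      using conic_example_cone a(1) \<open>0 < r\<close> by (simp add: conic_def)
    moreover have "0 < ((1 + r) *\<^sub>R a)$4" using a(2) \<open>0 < r\<close> by simp
    ultimately show ?thesis unfolding eq by (rule strictly_feasible_add_axis3[OF _ _ True])
  next
    case False
    have eq: "a + b = (1 + 1 / r) *\<^sub>R b + axis 3 (- c / r)"
      using b_eq \<open>0 < r\<close> by (simp add: vec4_eq_iff field_simps)
    have "(1 + 1 / r) *\<^sub>R b \<in> example_cone"
      using conic_example_cone b(1) \<open>0 < r\<close> by (simp add: conic_def)
    moreover have "0 < ((1 + 1 / r) *\<^sub>R b)$4" using b(2) \<open>0 < r\<close> by (simp add: add_pos_pos)
    moreover have "0 < - c / r" using False \<open>c \<noteq> 0\<close> \<open>0 < r\<close> by (simp add: divide_neg_pos)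
    ultimately show ?thesis unfolding eq by (rule strictly_feasible_add_axis3)
  qed
qed

lemma strictly_feasible_add:
  assumes a: "a \<in> example_cone" and b: "b \<in> example_cone"
    and indep: "\<not> collinear {0, a, b}" and off_face: "\<not> (a \<in> disk_face \<and> b \<in> disk_face)"
  shows "strictly_feasible (a + b)"
proof -
  consider "a$4 = 0" | "b$4 = 0" | "0 < a$4" "0 < b$4"
    using a b by (force simp: example_cone_def)
  then show ?thesis
  proof cases
    case 1
    show ?thesis by (rule strictly_feasible_add_of_fourth_zero[OF a 1 b indep])
  next
    case 2
    have "\<not> collinear {0, b, a}" using indep by (simp add: insert_commute)
    with strictly_feasible_add_of_fourth_zero[OF b 2 a] show ?thesis by (simp add: add.commute)
  next
    case pos: 3
    have slack_ge: "excess_gap a b \<le> slack l (a + b)" if "l \<in> tangents" for l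
      using slack_add[of l a b] that a b
      by (simp add: mem_example_cone_iff_slack[OF pos(1)] mem_example_cone_iff_slack[OF pos(2)])
    consider "0 < excess_gap a b" | "excess a = 0" "excess b = 0"
      | "b$4 *\<^sub>R planar a = a$4 *\<^sub>R planar b"
      using excess_gap_nonneg[OF pos] excess_gap_eq_0D[OF pos] excess_additive_imp_parallel[OF pos]
        excess_nonneg[of a] excess_nonneg[of b] by fastforce
    then show ?thesis
    proof cases
      case 1
      then show ?thesis using pos slack_ge unfolding strictly_feasible_def by auto
    next
      case 2
      then show ?thesis
        using strictly_feasible_add_over_disk[OF a _ b _ pos(1) off_face]
        by (simp add: excess_eq_0_iff)
    next
      case 3
      then show ?thesis using strictly_feasible_add_parallel[OF a pos(1) b pos(2) _ indep] by simp
    qed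
  qed
qed

section \<open>The faces of the cone\<close>

lemma disk_face_add_strict:
  assumes a: "a \<in> disk_face" and b: "b \<in> disk_face" and indep: "\<not> collinear {0, a, b}"
  shows "norm (planar (a + b)) < (a + b)$4"
proof (rule ccontr)
  let ?pa = "planar a" and ?pb = "planar b"
  assume "\<not> ?thesis"
  then have "a$4 + b$4 \<le> norm (?pa + ?pb)" by simp
  moreover have "norm ?pa \<le> a$4" "norm ?pb \<le> b$4" "a$3 = 0" "b$3 = 0"
    using a b by (simp_all add: disk_face_def)
  moreover note norm_triangle_ineq[of ?pa ?pb]
  ultimately have n: "norm ?pa = a$4" "norm ?pb = b$4"
    and tri: "norm (?pa + ?pb) = norm ?pa + norm ?pb"
    by linarith+
  from tri have "norm ?pa *\<^sub>R ?pb = norm ?pb *\<^sub>R ?pa" by (simp only: norm_triangle_eq)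
  then have par: "a$4 *\<^sub>R ?pb = b$4 *\<^sub>R ?pa" by (simp only: n)
  have "a$4 \<noteq> 0"
  proof
    assume "a$4 = 0"
    then have "a = 0"
      using n(1) \<open>a$3 = 0\<close> by (simp add: vec4_eq_iff planar_def complex_eq_iff)
    then show False using indep by (simp add: collinear_lemma)
  qed
  then have "b = (b$4 / a$4) *\<^sub>R a"
    using par \<open>a$3 = 0\<close> \<open>b$3 = 0\<close> by (simp add: vec4_eq_iff planar_def complex_eq_iff field_simps)
  then show False using indep by (auto simp: collinear_lemma)
qed

lemma add_mem_rel_interior_disk_face:
  assumes "a \<in> disk_face" "b \<in> disk_face" "\<not> collinear {0, a, b}"
  shows "a + b \<in> rel_interior disk_face"
proof -
  have "affine hull disk_face \<subseteq> {v. inner (axis 3 1) v = 0}"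
    by (rule hull_minimal) (auto simp: disk_face_eq affine_hyperplane)
  then have "{v. norm (planar v) < v$4} \<inter> affine hull disk_face \<subseteq> disk_face"
    by (auto simp: disk_face_def inner_commute[of "axis 3 1"] inner_axis)
  moreover have "open {v. norm (planar v) < v$4}"
    by (intro open_Collect_less continuous_intros)
  moreover have "a + b \<in> {v. norm (planar v) < v$4} \<inter> disk_face"
    using disk_face_add_strict[OF assms] assms(1,2) by (simp add: disk_face_def)
  ultimately show ?thesis unfolding mem_rel_interior by blast
qed

lemma face_of_example_cone_eq_self:
  assumes P: "P face_of example_cone" and ab: "a \<in> P" "b \<in> P" "\<not> collinear {0, a, b}"
    and off_face: "\<not> (a \<in> disk_face \<and> b \<in> disk_face)"
  shows "P = example_cone"
proof -
  have "a + b \<in> P"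
    using conic_convex_add face_of_conic[OF conic_example_cone P] face_of_imp_convex[OF P] ab(1,2) .
  moreover have "a + b \<in> interior example_cone"
    using face_of_imp_subset[OF P] ab off_face
    by (blast intro: strictly_feasible_interior strictly_feasible_add)
  ultimately show ?thesis using face_of_disjoint_interior[OF P] by blast
qed

lemma face_of_example_cone_eq_disk_face:
  assumes P: "P face_of example_cone" and "P \<subseteq> disk_face"
    and ab: "a \<in> P" "b \<in> P" "\<not> collinear {0, a, b}"
  shows "P = disk_face"
proof -
  have "a + b \<in> P"
    using conic_convex_add face_of_conic[OF conic_example_cone P] face_of_imp_convex[OF P] ab(1,2) .
  moreover have "a + b \<in> rel_interior disk_face"
    using add_mem_rel_interior_disk_face ab assms(2) by blast
  ultimately have "disk_face \<subseteq> P"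
  proof (intro subset_of_face_of[OF P])
    show "disk_face \<subseteq> example_cone" using mem_disk_face_iff by blast
  qed blast
  then show ?thesis using assms(2) by blast
qed

lemma face_of_example_cone_noncollinear:
  assumes P: "P face_of example_cone" and ab: "a \<in> P" "b \<in> P" "\<not> collinear {0, a, b}"
  shows "P = example_cone \<or> P = disk_face"
proof (cases "P \<subseteq> disk_face")
  case True
  then show ?thesis using face_of_example_cone_eq_disk_face[OF P True ab] by blast
next
  case False
  then obtain u where u: "u \<in> P" "u \<notin> disk_face" by blast
  show ?thesis
  proof (cases "a \<in> disk_face \<and> b \<in> disk_face")
    case True
    have "\<not> collinear {0, a, u}"
    proof
      assume "collinear {0, a, u}"
      moreover have "a \<noteq> 0" using ab(3) by (auto simp: collinear_lemma)
      moreover have "u \<noteq> 0" using u(2) by (auto simp: disk_face_def)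
      ultimately obtain c where "u = c *\<^sub>R a" by (auto simp: collinear_lemma)
      then have "u$3 = 0" using True by (simp add: disk_face_def)
      then show False using u face_of_imp_subset[OF P] mem_disk_face_iff by blast
    qed
    then show ?thesis using face_of_example_cone_eq_self[OF P ab(1) u(1)] u(2) by blast
  qed (use face_of_example_cone_eq_self[OF P ab] in blast)
qed

lemma face_of_example_cone_cases:
  assumes P: "P face_of example_cone"
  obtains "P \<subseteq> {0}" | "P = example_cone" | "P = disk_face"
    | v where "v \<in> example_cone" "v \<noteq> 0" "P = ray v"
proof (cases "\<exists>a\<in>P. \<exists>b\<in>P. \<not> collinear {0, a, b}")
  case True
  then show thesis using face_of_example_cone_noncollinear[OF P] that(2,3) by blast
next
  case all_collinear: False
  show thesis
  proof (cases "P \<subseteq> {0}")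
    case False
    then obtain v where v: "v \<in> P" "v \<noteq> 0" by blast
    have "P = ray v"
      using face_of_conic[OF conic_example_cone P] face_of_imp_subset[OF P] conic_example_cone
        example_cone_pointed v
    proof (rule conic_collinear_eq_ray)
      show "collinear {0, v, u}" if "u \<in> P" for u using all_collinear v(1) that by blast
    qed
    then show thesis using that(4) v face_of_imp_subset[OF P] by blast
  qed (rule that(1))
qed

section \<open>Niceness\<close>

lemma tangent_functional_in_dual:
  assumes "(\<zeta>, \<gamma>) \<in> tangents"
  shows "vec4 (- Re \<zeta>) (- Im \<zeta>) 1 \<gamma> \<in> dual_cone example_cone"
proof -
  have "0 \<le> x$3 - tangent_form (\<zeta>, \<gamma>) x" if x: "x \<in> example_cone" for x
  proof (cases "x$4 = 0")
    case True
    then have "planar x = 0" using example_cone_axis[OF x True] by (metis planar_axis3)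
    then show ?thesis using x True by (simp add: example_cone_def)
  next
    case False
    then have x4: "0 < x$4" using x by (simp add: example_cone_def)
    then have "0 \<le> slack (\<zeta>, \<gamma>) x" using x assms by (simp add: mem_example_cone_iff_slack)
    moreover have "0 \<le> (excess x)\<^sup>2 / x$4" using x4 by simp
    ultimately show ?thesis by (simp add: slack_def)
  qed
  then show ?thesis
    by (simp add: dual_cone_def inner_vec4 inner_complex_def planar_def algebra_simps)
qed

lemma dual_disk_face_bound:
  assumes y: "y \<in> dual_cone disk_face"
  shows "norm (planar y) \<le> y$4"
proof -
  define \<rho> where "\<rho> = norm (planar y)"
  have "vec4 0 0 0 1 \<in> disk_face" "vec4 (- y$1) (- y$2) 0 \<rho> \<in> disk_face"
    by (simp_all add: disk_face_def \<rho>_def planar_def cmod_def)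
  then have "0 \<le> y$4" "0 \<le> \<rho> * (y$4 - \<rho>)"
    using y by (auto simp: dual_cone_def inner_vec4 \<rho>_def cmod_def power2_eq_square
      planar_def algebra_simps)
  then show ?thesis unfolding \<rho>_def[symmetric]
    by (cases "\<rho> = 0") (auto simp: zero_le_mult_iff \<rho>_def)
qed

lemma axis3_shift_in_dual:
  assumes "norm (planar y) \<le> y$4"
  obtains s where "y + axis 3 s \<in> dual_cone example_cone"
proof (cases "planar y = 0")
  case True
  have "(y$4) *\<^sub>R vec4 0 0 0 1 \<in> dual_cone example_cone"
    using assms True
    by (intro dual_cone_scaleR) (auto simp: dual_cone_def inner_vec4 example_cone_def)
  moreover have "y + axis 3 (- y$3) = (y$4) *\<^sub>R vec4 0 0 0 1"
    using True by (simp add: vec4_eq_iff planar_def complex_eq_iff)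
  ultimately show thesis using that by metis
next
  case False
  define \<rho> where "\<rho> = norm (planar y)"
  have "0 < \<rho>" using False by (simp add: \<rho>_def)
  define n where "n = - (1 / \<rho>) *\<^sub>R planar y"
  have "norm n = 1" using \<open>0 < \<rho>\<close> by (simp add: n_def \<rho>_def)
  then obtain \<mu> where \<mu>: "0 < \<mu>" "(\<mu> *\<^sub>R n, \<mu>) \<in> tangents"
    using tangents_normal by blast
  have "(\<rho> / \<mu>) *\<^sub>R vec4 (- Re (\<mu> *\<^sub>R n)) (- Im (\<mu> *\<^sub>R n)) 1 \<mu>
      + (y$4 - \<rho>) *\<^sub>R vec4 0 0 0 1 \<in> dual_cone example_cone"
    using tangent_functional_in_dual[OF \<mu>(2)] \<open>0 < \<rho>\<close> \<mu>(1) assms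
    by (intro dual_cone_add dual_cone_scaleR)
      (auto simp: \<rho>_def dual_cone_def inner_vec4 example_cone_def)
  moreover have "(\<rho> / \<mu>) *\<^sub>R vec4 (- Re (\<mu> *\<^sub>R n)) (- Im (\<mu> *\<^sub>R n)) 1 \<mu>
      + (y$4 - \<rho>) *\<^sub>R vec4 0 0 0 1 = y + axis 3 (\<rho> / \<mu> - y$3)"
    using \<open>0 < \<rho>\<close> \<mu>(1) by (simp add: vec4_eq_iff n_def planar_def)
  ultimately show thesis using that by metis
qed

lemma nice_face_disk: "dual_cone disk_face \<subseteq> dual_plus_perp example_cone disk_face"
proof
  fix y assume "y \<in> dual_cone disk_face"
  then obtain s where "y + axis 3 s \<in> dual_cone example_cone"
    using axis3_shift_in_dual dual_disk_face_bound by blast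
  moreover have "axis 3 (- s) \<in> orth_compl disk_face"
    by (simp add: orth_compl_def inner_vec4 disk_face_def)
  ultimately have "(y + axis 3 s) + axis 3 (- s) \<in> dual_plus_perp example_cone disk_face"
    by (rule minkowski_sumI)
  then show "y \<in> dual_plus_perp example_cone disk_face"
    by (simp add: vec4_eq_iff)
qed

lemma nice_example_cone: "nice_cone example_cone"
proof (rule nice_coneI)
  fix P assume "is_face P example_cone"
  then have "P face_of example_cone" by (simp add: is_face_iff_face_of)
  then show "dual_cone P \<subseteq> dual_plus_perp example_cone P"
  proof (cases rule: face_of_example_cone_cases)
    case (4 v)
    have "vec4 0 0 1 1 \<in> dual_cone example_cone"
      by (simp add: dual_cone_def inner_vec4 example_cone_def)
    moreover have "0 < inner (vec4 0 0 1 1) v"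
    proof -
      have "0 \<le> v$3" "0 \<le> v$4" using 4(1) by (simp_all add: example_cone_def)
      moreover have "v$3 \<noteq> 0 \<or> v$4 \<noteq> 0" using example_cone_axis[OF 4(1)] 4(2) by auto
      ultimately show ?thesis by (auto simp: inner_vec4)
    qed
    ultimately show ?thesis unfolding 4(3) by (rule nice_face_ray)
  qed (simp_all add: nice_face_trivial nice_face_self nice_face_disk)
qed

section \<open>Failure of amenability\<close>

lemma quartic_point_in_example_cone: "vec4 1 t (t^4) 1 \<in> example_cone"
proof -
  have "excess (vec4 1 t (t^4) 1) \<le> t\<^sup>2 / 2"
    using sqrt_one_plus_square_le[of t] by (simp add: excess_def cmod_def)
  then have "(excess (vec4 1 t (t^4) 1))\<^sup>2 \<le> (t\<^sup>2 / 2)\<^sup>2"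
    using excess_nonneg by (rule power_mono)
  then have excess_le: "(excess (vec4 1 t (t^4) 1))\<^sup>2 \<le> t^4 / 4"
    by (simp add: power2_eq_square power4_eq_xxxx)
  have "tangent_form l (vec4 1 t (t^4) 1) + (excess (vec4 1 t (t^4) 1))\<^sup>2 \<le> t^4"
    if "l \<in> tangents" for l
  proof -
    have "tangent_form l (vec4 1 t (t^4) 1) \<le> t^4 / 2"
      using tangent_form_quartic[OF that] by simp
    moreover have "0 \<le> t^4" by simp
    ultimately show ?thesis using excess_le by linarith
  qed
  then show ?thesis by (simp add: example_cone_def)
qed

lemma infdist_example_cone_le: "infdist (vec4 1 t 0 1) example_cone \<le> t^4"
proof -
  have "infdist (vec4 1 t 0 1) example_cone \<le> dist (vec4 1 t 0 1) (vec4 1 t (t^4) 1)"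
    by (rule infdist_le[OF quartic_point_in_example_cone])
  also have "\<dots> = sqrt ((t^4)\<^sup>2)" by (simp add: dist_norm norm_vec4)
  also have "\<dots> = t^4" using real_sqrt_abs[of "t^4"] by simp
  finally show ?thesis .
qed

lemma infdist_disk_face_ge:
  assumes "\<bar>t\<bar> \<le> 1"
  shows "t\<^sup>2 / 6 \<le> infdist (vec4 1 t 0 1) disk_face"
proof -
  define c where "c = 1 + t\<^sup>2 / 2"
  define \<phi> where "\<phi> = vec4 1 t 0 (- c)"
  have separates: "inner \<phi> f \<le> 0" if f: "f \<in> disk_face" for f
  proof -
    have f4: "norm (planar f) \<le> f$4" using f by (simp add: disk_face_def)
    then have "0 \<le> f$4" using norm_ge_zero[of "planar f"] by linarith
    have "inner (Complex 1 t) (planar f) \<le> sqrt (1 + t\<^sup>2) * norm (planar f)"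
      using norm_cauchy_schwarz[of "Complex 1 t" "planar f"] by (simp add: cmod_def)
    also have "\<dots> \<le> sqrt (1 + t\<^sup>2) * f$4" using f4 by (simp add: mult_left_mono)
    also have "\<dots> \<le> c * f$4"
      using sqrt_one_plus_square_le[of t] \<open>0 \<le> f$4\<close> unfolding c_def by (rule mult_right_mono)
    finally show ?thesis by (simp add: \<phi>_def inner_vec4_planar)
  qed
  have "0 \<in> disk_face" by (simp add: disk_face_def)
  then have "inner \<phi> (vec4 1 t 0 1) / norm \<phi> \<le> infdist (vec4 1 t 0 1) disk_face"
    using separates by (intro infdist_ge_inner_div_norm) auto
  moreover have "inner \<phi> (vec4 1 t 0 1) = t\<^sup>2 / 2"
    by (simp add: \<phi>_def c_def inner_vec4 power2_eq_square)
  moreover have "norm \<phi> \<le> 3"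
  proof -
    have t2: "t\<^sup>2 \<le> 1" using assms by (simp add: abs_square_le_1)
    then have "c \<le> 3 / 2" by (simp add: c_def)
    then have "c\<^sup>2 \<le> (3 / 2)\<^sup>2" by (rule power_mono) (simp add: c_def)
    then have "1 + t\<^sup>2 + 0\<^sup>2 + (- c)\<^sup>2 \<le> 3\<^sup>2" using t2 by (simp add: power2_eq_square)
    then show ?thesis unfolding \<phi>_def norm_vec4 by (intro real_le_lsqrt) simp_all
  qed
  moreover have "\<phi> \<noteq> 0"
  proof
    assume "\<phi> = 0"
    then have "\<phi>$1 = 0" by simp
    then show False by (simp add: \<phi>_def)
  qed
  ultimately have "(t\<^sup>2 / 2) / 3 \<le> infdist (vec4 1 t 0 1) disk_face"
    using divide_left_mono[of "norm \<phi>" 3 "t\<^sup>2 / 2"] by simp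
  then show ?thesis by simp
qed

lemma vec4_mem_affine_hull_disk_face:
  assumes "\<bar>t\<bar> \<le> 1"
  shows "vec4 1 t 0 1 \<in> affine hull disk_face"
proof -
  have "0 \<in> disk_face" by (simp add: disk_face_def)
  then have span: "affine hull disk_face = span disk_face"
    by (intro affine_hull_span_0 hull_inc)
  have "t\<^sup>2 \<le> 1" using assms by (simp add: abs_square_le_1)
  then have "sqrt (1 + t\<^sup>2) \<le> 2" by (intro real_le_lsqrt) simp_all
  then have "vec4 1 t 0 2 \<in> disk_face" "vec4 0 0 0 1 \<in> disk_face"
    by (simp_all add: disk_face_def cmod_def)
  moreover have "vec4 1 t 0 1 = vec4 1 t 0 2 - vec4 0 0 0 1" by (simp add: vec4_eq_iff)
  ultimately show ?thesis unfolding span by (simp add: span_diff span_base)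
qed

lemma not_amenable_disk_face: "\<not> amenable_face disk_face example_cone"
proof
  assume "amenable_face disk_face example_cone"
  then obtain \<kappa> where \<kappa>: "0 < \<kappa>"
    and bound: "\<forall>x \<in> affine hull disk_face \<inter> ball 0 2.
                  infdist x disk_face \<le> \<kappa> * infdist x example_cone"
    unfolding amenable_face_def using bounded_ball by blast
  define t where "t = 1 / (1 + 6 * \<kappa>)"
  have t: "0 < t" "t \<le> 1" using \<kappa> by (auto simp: t_def)
  have "t\<^sup>2 \<le> 1" using t by (simp add: power_le_one)
  then have "norm (vec4 1 t 0 1) < 2"
    unfolding norm_vec4 by (intro real_less_lsqrt) simp_all
  then have "vec4 1 t 0 1 \<in> affine hull disk_face \<inter> ball 0 2"
    using vec4_mem_affine_hull_disk_face[of t] t by simp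
  then have "infdist (vec4 1 t 0 1) disk_face \<le> \<kappa> * infdist (vec4 1 t 0 1) example_cone"
    using bound by blast
  moreover have "t\<^sup>2 / 6 \<le> infdist (vec4 1 t 0 1) disk_face"
    using infdist_disk_face_ge[of t] t by simp
  ultimately have "t\<^sup>2 / 6 \<le> \<kappa> * infdist (vec4 1 t 0 1) example_cone" by linarith
  also have "\<dots> \<le> \<kappa> * t^4"
    using infdist_example_cone_le[of t] \<kappa> by (simp add: mult_left_mono)
  also have "\<dots> < t\<^sup>2 / 6"
  proof -
    have "(1 + 6 * \<kappa>)\<^sup>2 = 1 + 12 * \<kappa> + 36 * \<kappa>\<^sup>2" by (simp add: power2_eq_square algebra_simps)
    then have "6 * \<kappa> < (1 + 6 * \<kappa>)\<^sup>2" using \<kappa> zero_le_power2[of \<kappa>] by linarith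
    moreover have "0 < (1 + 6 * \<kappa>)\<^sup>2" using \<kappa> by simp
    ultimately have "6 * \<kappa> / (1 + 6 * \<kappa>)\<^sup>2 < 1" by simp
    then have "6 * \<kappa> * t\<^sup>2 < 1" by (simp add: t_def power_divide)
    then show ?thesis using t by (simp add: power4_eq_xxxx power2_eq_square field_simps)
  qed
  finally show False by simp
qed

theorem theorem5p3:
  shows "\<exists>K :: (real^4) set. closed K \<and> convex K \<and> cone K \<and> nice_cone K \<and> \<not> amenable K"
proof (intro exI[of _ example_cone] conjI)
  show "cone example_cone" using conic_example_cone by (simp add: cone_def conic_def)
  show "\<not> amenable example_cone"
    using is_face_disk_face not_amenable_disk_face by (auto simp: amenable_def)
qed (rule closed_example_cone convex_example_cone nice_example_cone)+

end
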